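(* Let $\mathbb{S}$ be a metric space with its Borel $\sigma$-field, let $\{\mu_n\}_{n=1,2,\ldots}$ be a sequence of measures on $\mathbb{S}$ converging weakly to a finite measure $\mu$ on $\mathbb{S}$, and let $\{f_n,g_n\}_{n=1,2,\ldots}$ be measurable $[-\infty,+\infty]$-valued functions on $\mathbb{S}$ such that $|f_n(s)|\le g_n(s)$ for all $n$ and $s\in\mathbb{S}$, and $$\limsup_{n\to\infty}\int_{\mathbb{S}} g_n(s)\,\mu_n(ds)\le\int_{\mathbb{S}}\liminf_{n\to\infty,\,s'\to s} g_n(s')\,\mu(ds)<+\infty.$$ If $\lim_{n\to\infty,\,s'\to s}f_n(s')$ exists for $\mu$-a.e. $s\in\mathbb{S}$, then $$\lim_{n\to\infty}\int_{\mathbb{S}} f_n(s)\,\mu_n(ds)=\int_{\mathbb{S}}\lim_{n\to\infty,\,s'\to s} f_n(s')\,\mu(ds).$$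
   Context: Weak convergence: $\int f\,d\mu_n\to\int f\,d\mu$ for all bounded continuous $f$. Integrals of extended-real functions are $\int f^+-\int f^-$, defined when one of these is finite; all integrals involved are assumed defined. $\liminf_{n\to\infty,s'\to s}g_n(s'):=\sup_{n\ge1,\delta>0}\inf_{m\ge n,\,s'\in B_\delta(s)}g_m(s')$, and $\lim_{n\to\infty,s'\to s}f_n(s')$ exists when this liminf for $f_n$ equals the corresponding $\limsup:=\inf_{n\ge1,\delta>0}\sup_{m\ge n,\,s'\in B_\delta(s)}f_m(s')$; $B_\delta(s)$ is the ball of radius $\delta$ about $s$. *)

theory Defs
  imports "HOL-Analysis.Analysis"
begin

definition eint :: "'a measure \<Rightarrow> ('a \<Rightarrow> ereal) \<Rightarrow> ereal" where
  "eint M f = enn2ereal (\<integral>\<^sup>+ x. e2ennreal (f x) \<partial>M)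
             - enn2ereal (\<integral>\<^sup>+ x. e2ennreal (- f x) \<partial>M)"

definition weak_conv :: "(nat \<Rightarrow> 'a::metric_space measure) \<Rightarrow> 'a measure \<Rightarrow> bool" where
  "weak_conv \<mu>s \<mu> \<longleftrightarrow> (\<forall>f :: 'a \<Rightarrow> real. continuous_on UNIV f \<and> bounded (range f) \<longrightarrow>
      (\<lambda>n. eint (\<mu>s n) (\<lambda>x. ereal (f x))) \<longlonglongrightarrow> eint \<mu> (\<lambda>x. ereal (f x)))"

definition jliminf :: "(nat \<Rightarrow> 'a::metric_space \<Rightarrow> ereal) \<Rightarrow> 'a \<Rightarrow> ereal" where
  "jliminf g s = (SUP n. SUP \<delta>\<in>{0::real<..}. INF m\<in>{n..}. INF s'\<in>ball s \<delta>. g m s')"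

definition jlimsup :: "(nat \<Rightarrow> 'a::metric_space \<Rightarrow> ereal) \<Rightarrow> 'a \<Rightarrow> ereal" where
  "jlimsup g s = (INF n. INF \<delta>\<in>{0::real<..}. SUP m\<in>{n..}. SUP s'\<in>ball s \<delta>. g m s')"

end

theory Submission
  imports Defs
begin

text \<open>
  Every nonnegative lower semicontinuous function is the increasing limit of bounded Lipschitz
  functions, so weak convergence gives \<open>\<integral>\<psi> d\<mu> \<le> liminf \<integral>\<psi> d\<mu>\<^sub>n\<close> for such \<open>\<psi>\<close>.
  The infimum of \<open>h\<^sub>m(s')\<close> over \<open>m \<ge> n\<close> and \<open>s'\<close> in a \<open>\<delta>\<close>-ball around \<open>s\<close>, made
  as large as possible by shrinking \<open>\<delta>\<close>, is lower semicontinuous in \<open>s\<close> and increases with \<open>n\<close>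
  to the joint lower limit of \<open>h\<close>. Monotone convergence then gives Fatou's lemma for weakly
  converging measures: \<open>\<integral> liminf h d\<mu> \<le> liminf \<integral>h\<^sub>n d\<mu>\<^sub>n\<close> for \<open>h \<ge> 0\<close>.

  Applied to \<open>g\<^sub>n + f\<^sub>n \<ge> 0\<close>, and combined with \<open>limsup \<integral>g\<^sub>n d\<mu>\<^sub>n \<le> \<integral> liminf g d\<mu> < \<infinity>\<close>, it
  gives \<open>\<integral> liminf f d\<mu> \<le> liminf \<integral>f\<^sub>n d\<mu>\<^sub>n\<close>; applied to \<open>g\<^sub>n - f\<^sub>n\<close> it gives
  \<open>limsup \<integral>f\<^sub>n d\<mu>\<^sub>n \<le> \<integral> limsup f d\<mu>\<close>. The two bounds coincide because \<open>liminf f = limsup f\<close>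
  \<open>\<mu>\<close>-a.e.; the domination \<open>|f| \<le> g\<close> keeps all integrals involved finite.
\<close>

section \<open>Lower semicontinuous functions\<close>

definition lower_semicontinuous :: "('a::topological_space \<Rightarrow> 'b::linorder) \<Rightarrow> bool" where
  "lower_semicontinuous f \<longleftrightarrow> (\<forall>y. open {s. y < f s})"

lemma lower_semicontinuous_iff_ball:
  fixes f :: "'a::metric_space \<Rightarrow> 'b::linorder"
  shows "lower_semicontinuous f \<longleftrightarrow> (\<forall>s y. y < f s \<longrightarrow> (\<exists>\<delta>>0. \<forall>s'\<in>ball s \<delta>. y < f s'))"
  unfolding lower_semicontinuous_def open_contains_ball subset_iff mem_Collect_eq by blast

lemma lower_semicontinuous_SUP:
  assumes "\<And>i. i \<in> I \<Longrightarrow> lower_semicontinuous (F i)"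
  shows "lower_semicontinuous (\<lambda>s. SUP i\<in>I. F i s :: 'b::complete_linorder)"
proof -
  have "{s. y < (SUP i\<in>I. F i s)} = (\<Union>i\<in>I. {s. y < F i s})" for y
    by (auto simp: less_SUP_iff)
  then show ?thesis
    using assms unfolding lower_semicontinuous_def by auto
qed

lemma lower_semicontinuous_e2ennreal:
  assumes "lower_semicontinuous f"
  shows "lower_semicontinuous (\<lambda>s. e2ennreal (f s))"
proof -
  have "y < e2ennreal x \<longleftrightarrow> enn2ereal y < x" for x y
  proof (cases "0 \<le> x")
    case True
    then show ?thesis
      by (simp add: less_ennreal.rep_eq enn2ereal_e2ennreal)
  next
    case False
    then have "x < 0" by simp
    moreover have "0 \<le> enn2ereal y" by simp
    ultimately have "\<not> enn2ereal y < x" by order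
    then show ?thesis
      using \<open>x < 0\<close> by (simp add: e2ennreal_neg)
  qed
  then show ?thesis
    using assms unfolding lower_semicontinuous_def by simp
qed

lemma borel_measurable_lower_semicontinuous:
  fixes f :: "'a::topological_space \<Rightarrow> 'b::{linorder_topology, second_countable_topology}"
  assumes "lower_semicontinuous f"
  shows "f \<in> borel_measurable borel"
  by (rule borel_measurableI_greater) (use assms in \<open>simp add: lower_semicontinuous_def\<close>)

definition lipschitz_minorant :: "nat \<Rightarrow> ('a::metric_space \<Rightarrow> ennreal) \<Rightarrow> 'a \<Rightarrow> real" where
  "lipschitz_minorant k \<psi> s = (INF t. enn2real (min (of_nat k) (\<psi> t)) + real k * dist s t)"

lemma lipschitz_minorant_bdd_below:
  "bdd_below (range (\<lambda>t. enn2real (min (of_nat k) (\<psi> t)) + real k * dist s t))"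
  by (rule bdd_belowI[of _ 0]) auto

lemma lipschitz_minorant_nonneg: "0 \<le> lipschitz_minorant k \<psi> s"
  unfolding lipschitz_minorant_def by (rule cINF_greatest) auto

lemma lipschitz_minorant_le_dist:
  "lipschitz_minorant k \<psi> s \<le> enn2real (min (of_nat k) (\<psi> t)) + real k * dist s t"
  unfolding lipschitz_minorant_def by (rule cINF_lower[OF lipschitz_minorant_bdd_below]) simp

lemma lipschitz_minorant_le: "lipschitz_minorant k \<psi> s \<le> enn2real (min (of_nat k) (\<psi> s))"
  using lipschitz_minorant_le_dist[of k \<psi> s s] by simp

lemma lipschitz_minorant_le_of_nat: "lipschitz_minorant k \<psi> s \<le> real k"
proof -
  have "enn2real (min (of_nat k) (\<psi> s)) \<le> enn2real (of_nat k)"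
    by (rule enn2real_mono) (auto simp: min_less_iff_disj of_nat_less_top)
  then show ?thesis
    using lipschitz_minorant_le[of k \<psi> s] by simp
qed

lemma lipschitz_on_lipschitz_minorant:
  "lipschitz_on (real k) UNIV (lipschitz_minorant k \<psi>)"
proof (rule lipschitz_onI)
  have le: "lipschitz_minorant k \<psi> s \<le> lipschitz_minorant k \<psi> s' + real k * dist s s'" for s s'
  proof -
    have "lipschitz_minorant k \<psi> s - real k * dist s s' \<le> lipschitz_minorant k \<psi> s'"
      unfolding lipschitz_minorant_def[of k \<psi> s']
    proof (rule cINF_greatest)
      fix t
      have "lipschitz_minorant k \<psi> s \<le> enn2real (min (of_nat k) (\<psi> t)) + real k * dist s t"
        by (rule lipschitz_minorant_le_dist)
      also have "real k * dist s t \<le> real k * dist s s' + real k * dist s' t"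
        by (metis dist_triangle distrib_left mult_left_mono of_nat_0_le_iff)
      finally show "lipschitz_minorant k \<psi> s - real k * dist s s'
          \<le> enn2real (min (of_nat k) (\<psi> t)) + real k * dist s' t"
        by simp
    qed simp
    then show ?thesis by simp
  qed
  fix x y
  show "dist (lipschitz_minorant k \<psi> x) (lipschitz_minorant k \<psi> y) \<le> real k * dist x y"
    using le[of x y] le[of y x] by (simp add: dist_real_def dist_commute abs_le_iff)
qed simp

lemma lipschitz_minorant_mono: "lipschitz_minorant k \<psi> s \<le> lipschitz_minorant (Suc k) \<psi> s"
  unfolding lipschitz_minorant_def[of "Suc k"]
proof (rule cINF_greatest)
  fix t
  have "min (of_nat k) (\<psi> t) \<le> min (of_nat (Suc k)) (\<psi> t)"
    by (intro min.mono of_nat_mono) auto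
  then have "enn2real (min (of_nat k) (\<psi> t)) \<le> enn2real (min (of_nat (Suc k)) (\<psi> t))"
    by (rule enn2real_mono) (simp add: min_less_iff_disj of_nat_less_top)
  then have "enn2real (min (of_nat k) (\<psi> t)) + real k * dist s t
      \<le> enn2real (min (of_nat (Suc k)) (\<psi> t)) + real (Suc k) * dist s t"
    by (intro add_mono mult_right_mono) auto
  moreover have "lipschitz_minorant k \<psi> s \<le> enn2real (min (of_nat k) (\<psi> t)) + real k * dist s t"
    by (rule lipschitz_minorant_le_dist)
  ultimately show "lipschitz_minorant k \<psi> s
      \<le> enn2real (min (of_nat (Suc k)) (\<psi> t)) + real (Suc k) * dist s t"
    by linarith
qed simp

lemma ennreal_lipschitz_minorant_le: "ennreal (lipschitz_minorant k \<psi> s) \<le> \<psi> s"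
proof -
  have "ennreal (lipschitz_minorant k \<psi> s) \<le> ennreal (enn2real (min (of_nat k) (\<psi> s)))"
    by (rule ennreal_leI) (rule lipschitz_minorant_le)
  also have "\<dots> \<le> \<psi> s"
    by (simp add: min_less_iff_disj of_nat_less_top)
  finally show ?thesis .
qed

lemma le_lipschitz_minorant:
  assumes "0 \<le> r" "r \<le> real k" "r \<le> real k * \<delta>" and ball: "\<And>t. t \<in> ball s \<delta> \<Longrightarrow> ennreal r \<le> \<psi> t"
  shows "r \<le> lipschitz_minorant k \<psi> s"
  unfolding lipschitz_minorant_def
proof (rule cINF_greatest)
  fix t
  show "r \<le> enn2real (min (of_nat k) (\<psi> t)) + real k * dist s t"
  proof (cases "t \<in> ball s \<delta>")
    case True
    have "ennreal r \<le> of_nat k"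
      using assms(2) by (simp add: ennreal_of_nat_eq_real_of_nat ennreal_leI)
    with ball[OF True] have "ennreal r \<le> min (of_nat k) (\<psi> t)"
      by simp
    then have "r \<le> enn2real (min (of_nat k) (\<psi> t))"
      using assms(1) by (metis enn2real_ennreal enn2real_mono min_less_iff_disj of_nat_less_top)
    moreover have "0 \<le> real k * dist s t" by simp
    ultimately show ?thesis by linarith
  next
    case False
    then have "real k * \<delta> \<le> real k * dist s t" by (intro mult_left_mono) auto
    moreover have "0 \<le> enn2real (min (of_nat k) (\<psi> t))" by simp
    ultimately show ?thesis using assms(3) by linarith
  qed
qed simp

lemma SUP_lipschitz_minorant:
  assumes "lower_semicontinuous \<psi>"
  shows "(SUP k. ennreal (lipschitz_minorant k \<psi> s)) = \<psi> s"
proof (rule antisym)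
  show "(SUP k. ennreal (lipschitz_minorant k \<psi> s)) \<le> \<psi> s"
    by (rule SUP_least) (rule ennreal_lipschitz_minorant_le)
  show "\<psi> s \<le> (SUP k. ennreal (lipschitz_minorant k \<psi> s))"
  proof (rule dense_le)
    fix y assume y: "y < \<psi> s"
    then obtain r where r: "y = ennreal r" "0 \<le> r"
      by (cases y rule: ennreal_cases) (auto simp: top.not_eq_extremum)
    obtain \<delta> where \<delta>: "\<delta> > 0" "\<forall>t\<in>ball s \<delta>. y < \<psi> t"
      using assms y unfolding lower_semicontinuous_iff_ball by blast
    obtain k :: nat where k: "r + r / \<delta> \<le> real k"
      using real_arch_simple by blast
    have "r / \<delta> \<ge> 0" using r \<delta> by simp
    then have "r \<le> real k" and "r / \<delta> \<le> real k"
      using k r by linarith+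
    then have "r \<le> lipschitz_minorant k \<psi> s"
      using r \<delta> by (intro le_lipschitz_minorant) (auto simp: pos_divide_le_eq less_imp_le)
    then have "y \<le> ennreal (lipschitz_minorant k \<psi> s)"
      using r by (simp add: ennreal_leI)
    also have "\<dots> \<le> (SUP k. ennreal (lipschitz_minorant k \<psi> s))"
      by (rule SUP_upper) simp
    finally show "y \<le> (SUP k. ennreal (lipschitz_minorant k \<psi> s))" .
  qed
qed

section \<open>Joint lower limits\<close>

definition jliminf_from :: "nat \<Rightarrow> (nat \<Rightarrow> 'a::metric_space \<Rightarrow> 'b::complete_linorder) \<Rightarrow> 'a \<Rightarrow> 'b"
  where "jliminf_from n h s = (SUP \<delta>\<in>{0::real<..}. INF m\<in>{n..}. INF s'\<in>ball s \<delta>. h m s')"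

lemma jliminf_eq_SUP_jliminf_from: "jliminf h s = (SUP n. jliminf_from n h s)"
  unfolding jliminf_def jliminf_from_def ..

lemma jliminf_from_mono: "n \<le> n' \<Longrightarrow> jliminf_from n h s \<le> jliminf_from n' h s"
  unfolding jliminf_from_def by (intro SUP_mono' INF_superset_mono) auto

lemma jliminf_from_le: "n \<le> m \<Longrightarrow> jliminf_from n h s \<le> h m s"
  unfolding jliminf_from_def by (intro SUP_least INF_lower2[of m] INF_lower) auto

lemma lower_semicontinuous_jliminf_from: "lower_semicontinuous (jliminf_from n h)"
  unfolding lower_semicontinuous_iff_ball
proof (intro allI impI)
  fix s y assume "y < jliminf_from n h s"
  then obtain \<delta> where \<delta>: "\<delta> > 0" "y < (INF m\<in>{n..}. INF s'\<in>ball s \<delta>. h m s')"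
    unfolding jliminf_from_def by (auto simp: less_SUP_iff)
  have "y < jliminf_from n h s'" if "s' \<in> ball s (\<delta>/2)" for s'
  proof -
    from that have "ball s' (\<delta>/2) \<subseteq> ball s \<delta>"
      by (auto simp: ball_def) (smt (verit) dist_commute dist_triangle)
    then have "(INF m\<in>{n..}. INF s'\<in>ball s \<delta>. h m s') \<le> (INF m\<in>{n..}. INF s'\<in>ball s' (\<delta>/2). h m s')"
      by (intro INF_mono' INF_superset_mono) auto
    also have "\<dots> \<le> jliminf_from n h s'"
      unfolding jliminf_from_def using \<delta> by (intro SUP_upper) auto
    finally show ?thesis using \<delta> by simp
  qed
  then show "\<exists>\<delta>>0. \<forall>s'\<in>ball s \<delta>. y < jliminf_from n h s'"
    using \<delta> by (intro exI[of _ "\<delta>/2"]) auto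
qed

lemma lower_semicontinuous_jliminf: "lower_semicontinuous (jliminf h)"
  unfolding jliminf_eq_SUP_jliminf_from[abs_def]
  by (intro lower_semicontinuous_SUP lower_semicontinuous_jliminf_from)

lemma borel_measurable_jliminf: "jliminf h \<in> borel_measurable borel"
  by (rule borel_measurable_lower_semicontinuous[OF lower_semicontinuous_jliminf])

lemma jliminf_mono: "(\<And>n s. f n s \<le> g n s) \<Longrightarrow> jliminf f s \<le> jliminf g s"
  unfolding jliminf_def by (intro SUP_mono' INF_mono') auto

lemma jliminf_const: "jliminf (\<lambda>n s. c) s = c"
  unfolding jliminf_def by (simp add: ball_empty)

lemma jliminf_nonneg: "(\<And>n s. 0 \<le> h n s) \<Longrightarrow> 0 \<le> jliminf h s"
  using jliminf_mono[of "\<lambda>n s. 0" h] by (simp add: jliminf_const)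

lemma jliminf_uminus: "jliminf (\<lambda>n s. - h n s) s = - jlimsup h s"
  unfolding jliminf_def jlimsup_def by (simp add: ereal_SUP_uminus_eq ereal_INF_uminus_eq)

lemma less_jliminfD:
  assumes "y < jliminf h s"
  obtains n \<delta> where "\<delta> > 0" "\<And>m s'. n \<le> m \<Longrightarrow> s' \<in> ball s \<delta> \<Longrightarrow> y < h m s'"
proof -
  obtain n \<delta> where "\<delta> > 0" "y < (INF m\<in>{n..}. INF s'\<in>ball s \<delta>. h m s')"
    using assms unfolding jliminf_def by (auto simp: less_SUP_iff)
  then show thesis
    using that by (meson atLeast_iff less_INF_D)
qed

lemma le_jliminfI:
  assumes "\<And>y. y < c \<Longrightarrow> \<exists>n. \<exists>\<delta>>0. \<forall>m\<ge>n. \<forall>s'\<in>ball s \<delta>. y < h m s'"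
  shows "c \<le> jliminf h s"
proof (rule dense_le)
  fix y assume "y < c"
  then obtain n \<delta> where "\<delta> > 0" "\<forall>m\<ge>n. \<forall>s'\<in>ball s \<delta>. y < h m s'"
    using assms by blast
  then have "y \<le> (INF m\<in>{n..}. INF s'\<in>ball s \<delta>. h m s')"
    by (intro INF_greatest) (auto intro: less_imp_le)
  also have "\<dots> \<le> jliminf h s"
    unfolding jliminf_def using \<open>\<delta> > 0\<close> by (intro SUP_upper2[of n] SUP_upper2[of \<delta>]) auto
  finally show "y \<le> jliminf h s" .
qed

lemma jliminf_add:
  assumes "\<bar>jliminf g s\<bar> \<noteq> \<infinity>" "\<bar>jliminf f s\<bar> \<noteq> \<infinity>"
  shows "jliminf g s + jliminf f s \<le> jliminf (\<lambda>n s. g n s + f n s) s"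
proof (rule le_jliminfI)
  obtain a b where ab: "jliminf g s = ereal a" "jliminf f s = ereal b"
    using assms by force
  fix y assume "y < jliminf g s + jliminf f s"
  then obtain z where z: "y < ereal z" "z < a + b"
    using ab ereal_dense2 by fastforce
  define e where "e = (a + b - z) / 2"
  have "ereal (a - e) < jliminf g s" "ereal (b - e) < jliminf f s"
    using ab z by (auto simp: e_def)
  then obtain n1 \<delta>1 n2 \<delta>2 where "\<delta>1 > 0" "\<delta>2 > 0"
    and g: "\<And>m s'. n1 \<le> m \<Longrightarrow> s' \<in> ball s \<delta>1 \<Longrightarrow> ereal (a - e) < g m s'"
    and f: "\<And>m s'. n2 \<le> m \<Longrightarrow> s' \<in> ball s \<delta>2 \<Longrightarrow> ereal (b - e) < f m s'"
    by (metis less_jliminfD)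
  have "y < g m s' + f m s'" if "max n1 n2 \<le> m" "s' \<in> ball s (min \<delta>1 \<delta>2)" for m s'
  proof -
    have "ereal (a - e) + ereal (b - e) < g m s' + f m s'"
      using that by (intro ereal_add_strict_mono2 g f) auto
    moreover have "ereal (a - e) + ereal (b - e) = ereal z"
      by (simp add: e_def)
    ultimately show ?thesis
      using z(1) by order
  qed
  then show "\<exists>n. \<exists>\<delta>>0. \<forall>m\<ge>n. \<forall>s'\<in>ball s \<delta>. y < g m s' + f m s'"
    using \<open>\<delta>1 > 0\<close> \<open>\<delta>2 > 0\<close> by (intro exI[of _ "max n1 n2"] exI[of _ "min \<delta>1 \<delta>2"]) auto
qed

section \<open>Integrals of extended-real functions\<close>

lemma ereal_abs_le_iff: "\<bar>x\<bar> \<le> z \<longleftrightarrow> x \<le> z \<and> - x \<le> (z::ereal)"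
  by (cases x; cases z) auto

lemma ereal_add_nonneg_of_uminus_le: "- x \<le> z \<Longrightarrow> 0 \<le> z + (x::ereal)"
  by (cases x; cases z) auto

lemma e2ennreal_add_pos_neg:
  fixes x z :: ereal
  assumes "0 \<le> z" "- x \<le> z"
  shows "e2ennreal (z + x) + e2ennreal (- x) = e2ennreal z + e2ennreal x"
proof (cases x)
  case (real b)
  show ?thesis
  proof (cases z)
    case (real a)
    with \<open>x = ereal b\<close> assms have "0 \<le> a" "- b \<le> a" by auto
    show ?thesis
    proof (cases "0 \<le> b")
      case True
      then show ?thesis
        using real \<open>x = ereal b\<close> \<open>0 \<le> a\<close> by (simp add: ennreal_neg ennreal_plus)
    next
      case False
      then have "ennreal (a + b) + ennreal (- b) = ennreal a"
        using \<open>- b \<le> a\<close> by (subst ennreal_plus[symmetric]) auto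
      then show ?thesis
        using real \<open>x = ereal b\<close> False by (simp add: ennreal_neg)
    qed
  qed (use assms real in auto)
qed (use assms in auto)

lemma eint_nonneg:
  assumes "AE x in M. 0 \<le> h x"
  shows "eint M h = enn2ereal (\<integral>\<^sup>+x. e2ennreal (h x) \<partial>M)"
proof -
  have "(\<integral>\<^sup>+x. e2ennreal (- h x) \<partial>M) = 0"
    using assms by (subst nn_integral_cong_AE[where v = "\<lambda>_. 0"]) (auto simp: e2ennreal_neg)
  then show ?thesis
    unfolding eint_def by (simp add: zero_ennreal.rep_eq)
qed

lemma eint_cong_AE:
  assumes "AE s in M. x s = y s"
  shows "eint M x = eint M y"
proof -
  have "(\<integral>\<^sup>+s. e2ennreal (x s) \<partial>M) = (\<integral>\<^sup>+s. e2ennreal (y s) \<partial>M)"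
    "(\<integral>\<^sup>+s. e2ennreal (- x s) \<partial>M) = (\<integral>\<^sup>+s. e2ennreal (- y s) \<partial>M)"
    by (rule nn_integral_cong_AE; use assms in \<open>eventually_elim, simp\<close>)+
  then show ?thesis
    unfolding eint_def by simp
qed

lemma eint_mono_AE:
  assumes "AE s in M. 0 \<le> x s \<and> x s \<le> y s"
  shows "eint M x \<le> eint M y"
proof -
  have "(\<integral>\<^sup>+s. e2ennreal (x s) \<partial>M) \<le> (\<integral>\<^sup>+s. e2ennreal (y s) \<partial>M)"
    by (rule nn_integral_mono_AE) (use assms in \<open>eventually_elim, simp add: e2ennreal_mono\<close>)
  moreover have "AE s in M. 0 \<le> x s" "AE s in M. 0 \<le> y s"
    using assms by (auto elim: eventually_mono)
  ultimately show ?thesis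
    by (simp add: eint_nonneg less_eq_ennreal.rep_eq[symmetric])
qed

text \<open>Without the hypothesis this fails, since \<open>\<infinity> - \<infinity> = \<infinity>\<close> in \<open>ereal\<close>.\<close>

lemma eint_uminus:
  assumes "(\<integral>\<^sup>+s. e2ennreal (x s) \<partial>M) \<noteq> \<infinity>"
  shows "eint M (\<lambda>s. - x s) = - eint M x"
proof -
  obtain p where p: "enn2ereal (\<integral>\<^sup>+s. e2ennreal (x s) \<partial>M) = ereal p"
    using assms by (cases "\<integral>\<^sup>+s. e2ennreal (x s) \<partial>M" rule: ennreal_cases) auto
  define N where "N = enn2ereal (\<integral>\<^sup>+s. e2ennreal (- x s) \<partial>M)"
  have "eint M (\<lambda>s. - x s) = N - ereal p" "eint M x = ereal p - N"
    unfolding eint_def N_def p[symmetric] by simp_all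
  moreover have "N \<ge> 0"
    unfolding N_def by simp
  ultimately show ?thesis
    by (cases N) simp_all
qed

lemma nn_integral_e2ennreal_finite:
  assumes "AE s in M. 0 \<le> z s \<and> x s \<le> z s" and "eint M z < \<infinity>"
  shows "(\<integral>\<^sup>+s. e2ennreal (x s) \<partial>M) \<noteq> \<infinity>"
proof -
  have "(\<integral>\<^sup>+s. e2ennreal (x s) \<partial>M) \<le> (\<integral>\<^sup>+s. e2ennreal (z s) \<partial>M)"
    by (rule nn_integral_mono_AE) (use assms(1) in \<open>eventually_elim, simp add: e2ennreal_mono\<close>)
  moreover have "eint M z = enn2ereal (\<integral>\<^sup>+s. e2ennreal (z s) \<partial>M)"
    using assms(1) by (intro eint_nonneg) (auto elim: eventually_mono)
  ultimately show ?thesis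
    using assms(2) by (auto simp: top_unique)
qed

lemma eint_add_dominated:
  assumes [measurable]: "x \<in> borel_measurable M" "z \<in> borel_measurable M"
    and dom: "AE s in M. 0 \<le> z s \<and> - x s \<le> z s" and fin: "eint M z < \<infinity>"
  shows "eint M (\<lambda>s. z s + x s) = eint M z + eint M x"
proof -
  define Z where "Z = (\<integral>\<^sup>+s. e2ennreal (z s) \<partial>M)"
  define P where "P = (\<integral>\<^sup>+s. e2ennreal (x s) \<partial>M)"
  define N where "N = (\<integral>\<^sup>+s. e2ennreal (- x s) \<partial>M)"
  define A where "A = (\<integral>\<^sup>+s. e2ennreal (z s + x s) \<partial>M)"
  have "A + N = (\<integral>\<^sup>+s. e2ennreal (z s + x s) + e2ennreal (- x s) \<partial>M)"
    unfolding A_def N_def by (rule nn_integral_add[symmetric]) measurable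
  also have "\<dots> = (\<integral>\<^sup>+s. e2ennreal (z s) + e2ennreal (x s) \<partial>M)"
    by (rule nn_integral_cong_AE) (use dom in \<open>eventually_elim, simp add: e2ennreal_add_pos_neg\<close>)
  also have "\<dots> = Z + P"
    unfolding Z_def P_def by (rule nn_integral_add) measurable
  finally have sum: "enn2ereal A + enn2ereal N = enn2ereal Z + enn2ereal P"
    by (metis plus_ennreal.rep_eq)
  have int_z: "eint M z = enn2ereal Z"
    unfolding Z_def by (rule eint_nonneg) (use dom in \<open>eventually_elim, simp\<close>)
  have int_zx: "eint M (\<lambda>s. z s + x s) = enn2ereal A"
    unfolding A_def
    by (rule eint_nonneg) (use dom in \<open>eventually_elim, simp add: ereal_add_nonneg_of_uminus_le\<close>)
  have int_x: "eint M x = enn2ereal P - enn2ereal N"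
    unfolding eint_def P_def N_def ..
  have "N \<le> Z"
    unfolding N_def Z_def
    by (rule nn_integral_mono_AE) (use dom in \<open>eventually_elim, simp add: e2ennreal_mono\<close>)
  moreover have "Z \<noteq> top"
    using fin int_z by auto
  ultimately have "N \<noteq> top"
    by (auto simp: top_unique)
  then obtain n' where n': "enn2ereal N = ereal n'"
    by (cases N rule: ennreal_cases) auto
  obtain z' where z': "enn2ereal Z = ereal z'"
    using \<open>Z \<noteq> top\<close> by (cases Z rule: ennreal_cases) auto
  have "enn2ereal A = enn2ereal Z + (enn2ereal P - enn2ereal N)"
    using sum unfolding n' z' by (cases "enn2ereal A"; cases "enn2ereal P") simp_all
  then show ?thesis
    unfolding int_z int_zx int_x .
qed

section \<open>Fatou's lemma for weakly converging measures\<close>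

lemma nn_integral_le_liminf_weak_conv:
  fixes \<psi> :: "'a::metric_space \<Rightarrow> ennreal"
  assumes sets: "sets \<mu> = sets borel" and wc: "weak_conv \<mu>s \<mu>"
    and lsc: "lower_semicontinuous \<psi>"
  shows "(\<integral>\<^sup>+x. \<psi> x \<partial>\<mu>) \<le> liminf (\<lambda>m. \<integral>\<^sup>+x. \<psi> x \<partial>\<mu>s m)"
proof -
  let ?\<phi> = "\<lambda>k x. ennreal (lipschitz_minorant k \<psi> x)"
  have conv: "(\<lambda>m. \<integral>\<^sup>+x. ?\<phi> k x \<partial>\<mu>s m) \<longlonglongrightarrow> (\<integral>\<^sup>+x. ?\<phi> k x \<partial>\<mu>)" for k
  proof -
    have "continuous_on UNIV (lipschitz_minorant k \<psi>)"
      by (rule lipschitz_on_continuous_on[OF lipschitz_on_lipschitz_minorant])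
    moreover have "bounded (range (lipschitz_minorant k \<psi>))"
      unfolding bounded_real
      by (auto simp: abs_of_nonneg lipschitz_minorant_nonneg lipschitz_minorant_le_of_nat
          intro!: exI[of _ "real k"])
    ultimately have "(\<lambda>m. eint (\<mu>s m) (\<lambda>x. ereal (lipschitz_minorant k \<psi> x)))
        \<longlonglongrightarrow> eint \<mu> (\<lambda>x. ereal (lipschitz_minorant k \<psi> x))"
      using wc unfolding weak_conv_def by blast
    then show ?thesis
      by (simp add: eint_nonneg lipschitz_minorant_nonneg)
  qed
  have meas: "?\<phi> k \<in> borel_measurable \<mu>" for k
  proof -
    have "lipschitz_minorant k \<psi> \<in> borel_measurable borel"
      by (intro borel_measurable_continuous_onI lipschitz_on_continuous_on[OF lipschitz_on_lipschitz_minorant])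
    then show ?thesis
      unfolding measurable_cong_sets[OF sets refl] by measurable
  qed
  have inc: "incseq ?\<phi>"
    by (intro incseq_SucI le_funI ennreal_leI lipschitz_minorant_mono)
  have "(\<integral>\<^sup>+x. \<psi> x \<partial>\<mu>) = (\<integral>\<^sup>+x. (SUP k. ?\<phi> k x) \<partial>\<mu>)"
    by (simp add: SUP_lipschitz_minorant[OF lsc])
  also have "\<dots> = (SUP k. \<integral>\<^sup>+x. ?\<phi> k x \<partial>\<mu>)"
    by (rule nn_integral_monotone_convergence_SUP[OF inc meas])
  also have "\<dots> \<le> liminf (\<lambda>m. \<integral>\<^sup>+x. \<psi> x \<partial>\<mu>s m)"
  proof (rule SUP_least)
    fix k
    have "?\<phi> k x \<le> \<psi> x" for x
      by (rule ennreal_lipschitz_minorant_le)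
    then have "liminf (\<lambda>m. \<integral>\<^sup>+x. ?\<phi> k x \<partial>\<mu>s m) \<le> liminf (\<lambda>m. \<integral>\<^sup>+x. \<psi> x \<partial>\<mu>s m)"
      by (intro Liminf_mono always_eventually allI nn_integral_mono)
    then show "(\<integral>\<^sup>+x. ?\<phi> k x \<partial>\<mu>) \<le> liminf (\<lambda>m. \<integral>\<^sup>+x. \<psi> x \<partial>\<mu>s m)"
      using lim_imp_Liminf[OF trivial_limit_sequentially conv[of k]] by simp
  qed
  finally show ?thesis .
qed

lemma nn_integral_jliminf_le_liminf:
  fixes h :: "nat \<Rightarrow> 'a::metric_space \<Rightarrow> ereal"
  assumes sets: "sets \<mu> = sets borel" and wc: "weak_conv \<mu>s \<mu>"
  shows "(\<integral>\<^sup>+x. e2ennreal (jliminf h x) \<partial>\<mu>) \<le> liminf (\<lambda>n. \<integral>\<^sup>+x. e2ennreal (h n x) \<partial>\<mu>s n)"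
proof -
  define \<psi> where "\<psi> n s = e2ennreal (jliminf_from n h s)" for n s
  have lsc: "lower_semicontinuous (\<psi> n)" for n
    unfolding \<psi>_def by (intro lower_semicontinuous_e2ennreal lower_semicontinuous_jliminf_from)
  have inc: "incseq \<psi>"
    unfolding \<psi>_def by (intro incseq_SucI le_funI e2ennreal_mono jliminf_from_mono) simp
  have "e2ennreal (jliminf h x) = (SUP n. \<psi> n x)" for x
    unfolding jliminf_eq_SUP_jliminf_from \<psi>_def
    by (rule sup_continuousD[OF sup_continuous_e2ennreal[OF sup_continuous_id]])
      (auto intro: monoI jliminf_from_mono)
  then have "(\<integral>\<^sup>+x. e2ennreal (jliminf h x) \<partial>\<mu>) = (\<integral>\<^sup>+x. (SUP n. \<psi> n x) \<partial>\<mu>)"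
    by simp
  also have "\<dots> = (SUP n. \<integral>\<^sup>+x. \<psi> n x \<partial>\<mu>)"
    by (rule nn_integral_monotone_convergence_SUP[OF inc])
      (simp add: measurable_cong_sets[OF sets refl] borel_measurable_lower_semicontinuous[OF lsc])
  also have "\<dots> \<le> liminf (\<lambda>n. \<integral>\<^sup>+x. e2ennreal (h n x) \<partial>\<mu>s n)"
  proof (rule SUP_least)
    fix n
    have "(\<integral>\<^sup>+x. \<psi> n x \<partial>\<mu>) \<le> liminf (\<lambda>m. \<integral>\<^sup>+x. \<psi> n x \<partial>\<mu>s m)"
      by (rule nn_integral_le_liminf_weak_conv[OF sets wc lsc])
    also have "\<dots> \<le> liminf (\<lambda>m. \<integral>\<^sup>+x. e2ennreal (h m x) \<partial>\<mu>s m)"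
      unfolding \<psi>_def
      by (intro Liminf_mono) (auto simp: eventually_sequentially
          intro!: exI[of _ n] nn_integral_mono e2ennreal_mono jliminf_from_le)
    finally show "(\<integral>\<^sup>+x. \<psi> n x \<partial>\<mu>) \<le> liminf (\<lambda>m. \<integral>\<^sup>+x. e2ennreal (h m x) \<partial>\<mu>s m)" .
  qed
  finally show ?thesis .
qed

lemma eint_jliminf_le_liminf:
  fixes h :: "nat \<Rightarrow> 'a::metric_space \<Rightarrow> ereal"
  assumes sets: "sets \<mu> = sets borel" and wc: "weak_conv \<mu>s \<mu>" and nonneg: "\<And>n s. 0 \<le> h n s"
  shows "eint \<mu> (jliminf h) \<le> liminf (\<lambda>n. eint (\<mu>s n) (h n))"
proof -
  have "0 \<le> jliminf h s" for s
    using nonneg by (rule jliminf_nonneg)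
  then have "eint \<mu> (jliminf h) = enn2ereal (\<integral>\<^sup>+x. e2ennreal (jliminf h x) \<partial>\<mu>)"
    by (simp add: eint_nonneg)
  also have "\<dots> \<le> enn2ereal (liminf (\<lambda>n. \<integral>\<^sup>+x. e2ennreal (h n x) \<partial>\<mu>s n))"
    using nn_integral_jliminf_le_liminf[OF sets wc] by (simp add: less_eq_ennreal.rep_eq)
  also have "\<dots> = liminf (\<lambda>n. enn2ereal (\<integral>\<^sup>+x. e2ennreal (h n x) \<partial>\<mu>s n))"
    by (rule Liminf_compose_continuous_mono[symmetric])
      (auto simp: continuous_on_enn2ereal mono_def less_eq_ennreal.rep_eq)
  also have "\<dots> = liminf (\<lambda>n. eint (\<mu>s n) (h n))"
    by (simp add: eint_nonneg nonneg)
  finally show ?thesis .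
qed

lemma le_liminf_of_add_le_liminf:
  fixes F G :: "nat \<Rightarrow> ereal"
  assumes "c + l \<le> liminf (\<lambda>n. F n + G n)" "limsup G \<le> c" "\<bar>c\<bar> \<noteq> \<infinity>"
  shows "l \<le> liminf F"
proof -
  have "l + c \<le> liminf F + limsup G"
    using assms(1) ereal_liminf_limsup_add[of F G] by (simp add: add.commute)
  also have "\<dots> \<le> liminf F + c"
    using assms(2) by (rule add_left_mono)
  finally show ?thesis
    using assms(3) by (auto simp: ereal_add_le_add_iff2)
qed

lemma tendsto_of_limsup_le_liminf:
  fixes X :: "nat \<Rightarrow> 'a::{complete_linorder, linorder_topology}"
  assumes "limsup X \<le> l" "l \<le> liminf X"
  shows "X \<longlonglongrightarrow> l"
proof -
  have "liminf X \<le> limsup X"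
    by (simp add: Liminf_le_Limsup)
  with assms have "liminf X = l" "limsup X = l"
    by order+
  then show ?thesis
    by (intro Liminf_eq_Limsup) simp_all
qed

lemma eint_jliminf_le_liminf_dominated:
  fixes \<mu>s :: "nat \<Rightarrow> 'a::metric_space measure" and f g :: "nat \<Rightarrow> 'a \<Rightarrow> ereal"
  assumes sets: "\<And>n. sets (\<mu>s n) = sets borel" "sets \<mu> = sets borel"
    and wc: "weak_conv \<mu>s \<mu>"
    and meas: "\<And>n. f n \<in> borel_measurable borel" "\<And>n. g n \<in> borel_measurable borel"
    and dom: "\<And>n s. 0 \<le> g n s" "\<And>n s. - f n s \<le> g n s"
    and lim: "limsup (\<lambda>n. eint (\<mu>s n) (g n)) \<le> eint \<mu> (jliminf g)" "eint \<mu> (jliminf g) < \<infinity>"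
    and dom_lim: "AE s in \<mu>. \<bar>jliminf f s\<bar> \<le> jliminf g s"
  shows "eint \<mu> (jliminf f) \<le> liminf (\<lambda>n. eint (\<mu>s n) (f n))"
proof (rule le_liminf_of_add_le_liminf)
  let ?G = "jliminf g" and ?L = "jliminf f"
  have [measurable]: "f n \<in> borel_measurable (\<mu>s n)" "g n \<in> borel_measurable (\<mu>s n)" for n
    using meas by (simp_all add: measurable_cong_sets[OF sets(1) refl])
  have [measurable]: "?G \<in> borel_measurable \<mu>" "?L \<in> borel_measurable \<mu>"
    by (simp_all add: measurable_cong_sets[OF sets(2) refl] borel_measurable_jliminf)
  have G_nonneg: "0 \<le> ?G s" for s
    using dom(1) by (rule jliminf_nonneg)
  have "(\<integral>\<^sup>+s. e2ennreal (?G s) \<partial>\<mu>) \<noteq> \<infinity>"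
    using lim(2) G_nonneg by (intro nn_integral_e2ennreal_finite) auto
  then have "AE s in \<mu>. e2ennreal (?G s) \<noteq> \<infinity>"
    by (intro nn_integral_noteq_infinite) auto
  with dom_lim have finite_limits: "AE s in \<mu>. \<bar>?G s\<bar> \<noteq> \<infinity> \<and> \<bar>?L s\<bar> \<noteq> \<infinity>"
    by eventually_elim (use G_nonneg in \<open>auto simp: ereal_abs_le_iff\<close>)
  have "eint \<mu> ?G + eint \<mu> ?L = eint \<mu> (\<lambda>s. ?G s + ?L s)"
    using dom_lim lim(2) G_nonneg
    by (intro eint_add_dominated[symmetric]) (auto elim!: eventually_mono simp: ereal_abs_le_iff)
  also have "\<dots> \<le> eint \<mu> (jliminf (\<lambda>n s. g n s + f n s))"
    by (rule eint_mono_AE) (use dom_lim finite_limits in \<open>eventually_elim,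
        auto simp: ereal_abs_le_iff ereal_add_nonneg_of_uminus_le jliminf_add\<close>)
  also have "\<dots> \<le> liminf (\<lambda>n. eint (\<mu>s n) (\<lambda>s. g n s + f n s))"
    using dom by (intro eint_jliminf_le_liminf sets wc ereal_add_nonneg_of_uminus_le)
  also have "\<dots> = liminf (\<lambda>n. eint (\<mu>s n) (f n) + eint (\<mu>s n) (g n))"
  proof (rule Liminf_eq)
    have "\<forall>\<^sub>F n in sequentially. eint (\<mu>s n) (g n) < \<infinity>"
      using lim by (intro Limsup_lessD) auto
    then show "\<forall>\<^sub>F n in sequentially.
        eint (\<mu>s n) (\<lambda>s. g n s + f n s) = eint (\<mu>s n) (f n) + eint (\<mu>s n) (g n)"
      by eventually_elim (use dom in \<open>subst eint_add_dominated, auto simp: add.commute\<close>)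
  qed
  finally show "eint \<mu> ?G + eint \<mu> ?L \<le> liminf (\<lambda>n. eint (\<mu>s n) (f n) + eint (\<mu>s n) (g n))" .
  show "limsup (\<lambda>n. eint (\<mu>s n) (g n)) \<le> eint \<mu> ?G"
    by (rule lim(1))
  show "\<bar>eint \<mu> ?G\<bar> \<noteq> \<infinity>"
    using lim(2) G_nonneg by (auto simp: eint_nonneg)
qed

lemma limsup_eint_le_jlimsup_dominated:
  fixes \<mu>s :: "nat \<Rightarrow> 'a::metric_space measure" and f g :: "nat \<Rightarrow> 'a \<Rightarrow> ereal"
  assumes sets: "\<And>n. sets (\<mu>s n) = sets borel" "sets \<mu> = sets borel"
    and wc: "weak_conv \<mu>s \<mu>"
    and meas: "\<And>n. f n \<in> borel_measurable borel" "\<And>n. g n \<in> borel_measurable borel"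
    and dom: "\<And>n s. 0 \<le> g n s" "\<And>n s. f n s \<le> g n s"
    and lim: "limsup (\<lambda>n. eint (\<mu>s n) (g n)) \<le> eint \<mu> (jliminf g)" "eint \<mu> (jliminf g) < \<infinity>"
    and dom_lim: "AE s in \<mu>. \<bar>jlimsup f s\<bar> \<le> jliminf g s"
  shows "limsup (\<lambda>n. eint (\<mu>s n) (f n)) \<le> eint \<mu> (jlimsup f)"
proof -
  have "(\<integral>\<^sup>+s. e2ennreal (jlimsup f s) \<partial>\<mu>) \<noteq> \<infinity>"
    using dom_lim lim(2) dom(1)
    by (intro nn_integral_e2ennreal_finite) (auto elim!: eventually_mono simp: ereal_abs_le_iff jliminf_nonneg)
  moreover have "jliminf (\<lambda>n s. - f n s) = (\<lambda>s. - jlimsup f s)"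
    by (simp add: fun_eq_iff jliminf_uminus)
  ultimately have "- eint \<mu> (jlimsup f) = eint \<mu> (jliminf (\<lambda>n s. - f n s))"
    by (simp add: eint_uminus)
  also have "\<dots> \<le> liminf (\<lambda>n. eint (\<mu>s n) (\<lambda>s. - f n s))"
    using dom_lim
    by (intro eint_jliminf_le_liminf_dominated[OF sets wc _ meas(2) dom(1) _ lim])
      (auto simp: jliminf_uminus dom(2) meas(1))
  also have "\<dots> = liminf (\<lambda>n. - eint (\<mu>s n) (f n))"
  proof (rule Liminf_eq)
    have "\<forall>\<^sub>F n in sequentially. eint (\<mu>s n) (g n) < \<infinity>"
      using lim by (intro Limsup_lessD) auto
    then show "\<forall>\<^sub>F n in sequentially. eint (\<mu>s n) (\<lambda>s. - f n s) = - eint (\<mu>s n) (f n)"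
    proof eventually_elim
      case (elim n)
      then show ?case
        using dom by (intro eint_uminus nn_integral_e2ennreal_finite[where z = "g n"]) auto
    qed
  qed
  also have "\<dots> = - limsup (\<lambda>n. eint (\<mu>s n) (f n))"
    by (rule ereal_Liminf_uminus)
  finally show ?thesis
    by simp
qed

theorem corollary2p10:
  fixes \<mu>s :: "nat \<Rightarrow> 'a::metric_space measure" and \<mu> :: "'a measure"
    and f g :: "nat \<Rightarrow> 'a \<Rightarrow> ereal"
  assumes "\<And>n. sets (\<mu>s n) = sets borel"
    and "sets \<mu> = sets borel"
    and "finite_measure \<mu>"
    and "weak_conv \<mu>s \<mu>"
    and "\<And>n. f n \<in> borel_measurable borel"
    and "\<And>n. g n \<in> borel_measurable borel"
    and "\<And>n s. \<bar>f n s\<bar> \<le> g n s"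
    and "limsup (\<lambda>n. eint (\<mu>s n) (g n)) \<le> eint \<mu> (jliminf g)"
    and "eint \<mu> (jliminf g) < \<infinity>"
    and "AE s in \<mu>. jliminf f s = jlimsup f s"
  shows "(\<lambda>n. eint (\<mu>s n) (f n)) \<longlonglongrightarrow> eint \<mu> (jliminf f)"
proof (rule tendsto_of_limsup_le_liminf)
  have dom: "0 \<le> g n s" "f n s \<le> g n s" "- f n s \<le> g n s" for n s
    using assms(7)[of n s] by (auto simp: ereal_abs_le_iff intro: order_trans[OF abs_ereal_pos])
  have "jliminf f s \<le> jliminf g s" "- jlimsup f s \<le> jliminf g s" for s
    using jliminf_mono[of f g s] jliminf_mono[of "\<lambda>n s. - f n s" g s] dom
    by (simp_all add: jliminf_uminus)
  with assms(10) have dom_lim: "AE s in \<mu>. \<bar>jliminf f s\<bar> \<le> jliminf g s \<and> \<bar>jlimsup f s\<bar> \<le> jliminf g s"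
    by (auto simp: ereal_abs_le_iff elim!: eventually_mono dest: sym)
  show "eint \<mu> (jliminf f) \<le> liminf (\<lambda>n. eint (\<mu>s n) (f n))"
    using dom_lim by (intro eint_jliminf_le_liminf_dominated[OF assms(1,2,4,5,6) dom(1,3) assms(8,9)])
      (auto elim: eventually_mono)
  show "limsup (\<lambda>n. eint (\<mu>s n) (f n)) \<le> eint \<mu> (jliminf f)"
    using limsup_eint_le_jlimsup_dominated[OF assms(1,2,4,5,6) dom(1,2) assms(8,9)] dom_lim
      eint_cong_AE[OF assms(10)] by (auto elim: eventually_mono)
qed

end
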